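(* Let $\Gamma$ be any simple graph and $d\geq 1$ an integer. Then $$\{|C| \;:\; C\subseteq V(\Gamma),\ d_\Gamma(C)=d\}=\{|C| \;:\; C\subseteq V(\Gamma),\ d_\Gamma(C)\geq d\},$$ where $d_\Gamma(C)=\min\{d_\Gamma(x,y)\;:\; x,y\in C,\ x\neq y\}$.
   Context: For a simple graph $\Gamma$, $d_\Gamma(x,y)$ denotes the length (number of edges) of a shortest path between vertices $x$ and $y$ of $\Gamma$. *)

theory Defs
  imports Main "HOL-Library.Extended_Nat"
begin

definition simple_graph :: "'a set \<Rightarrow> ('a \<Rightarrow> 'a \<Rightarrow> bool) \<Rightarrow> bool" where
  "simple_graph V E \<longleftrightarrow>
     (\<forall>x y. E x y \<longrightarrow> x \<in> V \<and> y \<in> V) \<and>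
     (\<forall>x y. E x y \<longrightarrow> E y x) \<and>
     (\<forall>x. \<not> E x x)"

definition graph_walk :: "'a set \<Rightarrow> ('a \<Rightarrow> 'a \<Rightarrow> bool) \<Rightarrow> 'a list \<Rightarrow> bool" where
  "graph_walk V E xs \<longleftrightarrow>
     xs \<noteq> [] \<and> set xs \<subseteq> V \<and> (\<forall>i. Suc i < length xs \<longrightarrow> E (xs ! i) (xs ! Suc i))"

definition gdist :: "'a set \<Rightarrow> ('a \<Rightarrow> 'a \<Rightarrow> bool) \<Rightarrow> 'a \<Rightarrow> 'a \<Rightarrow> enat" where
  "gdist V E x y =
     (INF xs \<in> {xs. graph_walk V E xs \<and> hd xs = x \<and> last xs = y}. enat (length xs - 1))"

definition connected_graph :: "'a set \<Rightarrow> ('a \<Rightarrow> 'a \<Rightarrow> bool) \<Rightarrow> bool" where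
  "connected_graph V E \<longleftrightarrow> (\<forall>x\<in>V. \<forall>y\<in>V. gdist V E x y \<noteq> \<infinity>)"

definition code_dist :: "'a set \<Rightarrow> ('a \<Rightarrow> 'a \<Rightarrow> bool) \<Rightarrow> 'a set \<Rightarrow> enat" where
  "code_dist V E C = (INF p \<in> {(x, y). x \<in> C \<and> y \<in> C \<and> x \<noteq> y}. gdist V E (fst p) (snd p))"

end

(* If d(C) = D > d, pick x, y in C with d(x, y) = D and replace x by its neighbour v on a
   shortest path to y.  Every other point of C is at distance at least D from x, hence at
   least D - 1 from v, while d(v, y) = D - 1 >= 1; so the new set has the same size and
   minimum distance exactly D - 1.  Iterating brings the minimum distance down to d.
   Connectivity only makes d(C) finite. *)

theory Submission
  imports Defs
begin

lemma graph_walk_Cons_Cons: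
  "graph_walk V E (x # y # ys) \<longleftrightarrow> x \<in> V \<and> E x y \<and> graph_walk V E (y # ys)"
  by (auto simp: graph_walk_def nth_Cons less_Suc_eq_0_disj split: nat.splits)

lemma graph_walk_rev:
  assumes "symp E" and "graph_walk V E xs"
  shows "graph_walk V E (rev xs)"
  unfolding graph_walk_def
proof (intro conjI allI impI)
  show "rev xs \<noteq> []" "set (rev xs) \<subseteq> V"
    using assms(2) by (auto simp: graph_walk_def)
  fix i assume i: "Suc i < length (rev xs)"
  define j where "j = length xs - Suc (Suc i)"
  have "E (xs ! j) (xs ! Suc j)"
    using assms(2) i by (auto simp: graph_walk_def j_def)
  then have "E (xs ! Suc j) (xs ! j)"
    using assms(1) by (blast dest: sympD)
  moreover have "rev xs ! i = xs ! Suc j" "rev xs ! Suc i = xs ! j"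
    using i by (auto simp: rev_nth j_def Suc_diff_Suc)
  ultimately show "E (rev xs ! i) (rev xs ! Suc i)" by simp
qed

lemma gdist_le_walk_length:
  assumes "graph_walk V E xs"
  shows "gdist V E (hd xs) (last xs) \<le> enat (length xs - 1)"
  unfolding gdist_def using assms by (auto intro!: INF_lower)

lemma gdist_obtain_shortest_walk:
  assumes "gdist V E x y = enat n"
  obtains xs where "graph_walk V E xs" "hd xs = x" "last xs = y" "length xs = Suc n"
proof -
  let ?W = "{xs. graph_walk V E xs \<and> hd xs = x \<and> last xs = y}"
  let ?len = "\<lambda>xs. enat (length xs - 1)"
  have "?W \<noteq> {}"
  proof
    assume "?W = {}"
    then have "gdist V E x y = \<infinity>"
      unfolding gdist_def by (simp only: image_empty Inf_empty top_enat_def)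
    with assms show False
      by simp
  qed
  then obtain w where "w \<in> ?W"
    by blast
  then have "Inf (?len ` ?W) \<in> ?len ` ?W"
    by (rule wellorder_InfI[OF imageI])
  then obtain xs where xs: "xs \<in> ?W" "?len xs = gdist V E x y"
    unfolding gdist_def by auto
  moreover have "xs \<noteq> []"
    using xs(1) by (simp add: graph_walk_def)
  ultimately have "length xs = Suc n"
    using assms by (cases xs) auto
  with xs(1) show thesis
    using that by blast
qed

lemma gdist_self:
  assumes "v \<in> V"
  shows "gdist V E v v = 0"
proof -
  have "graph_walk V E [v]"
    using assms by (simp add: graph_walk_def)
  then have "gdist V E v v \<le> enat 0"
    using gdist_le_walk_length by fastforce
  then show ?thesis
    by (metis le_zero_eq zero_enat_def)
qed

lemma gdist_sym:
  assumes "symp E"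
  shows "gdist V E x y = gdist V E y x"
proof -
  have le: "gdist V E y x \<le> gdist V E x y" for x y
  proof (cases "gdist V E x y")
    case (enat n)
    then obtain xs where xs: "graph_walk V E xs" "hd xs = x" "last xs = y" "length xs = Suc n"
      by (rule gdist_obtain_shortest_walk)
    then have "xs \<noteq> []"
      by auto
    then show ?thesis
      using gdist_le_walk_length[OF graph_walk_rev[OF assms xs(1)]] xs enat
      by (simp add: hd_rev last_rev)
  qed simp
  show ?thesis
    using le[of x y] le[of y x] by (rule antisym)
qed

lemma gdist_edge_le:
  assumes "x \<in> V" and "E x v"
  shows "gdist V E x z \<le> 1 + gdist V E v z"
proof (cases "gdist V E v z")
  case (enat n)
  then obtain xs where xs: "graph_walk V E xs" "hd xs = v" "last xs = z" "length xs = Suc n"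
    by (rule gdist_obtain_shortest_walk)
  then obtain ys where xs_eq: "xs = v # ys"
    by (cases xs) auto
  then have "graph_walk V E (x # xs)"
    using xs(1) assms by (simp add: graph_walk_Cons_Cons)
  then show ?thesis
    using gdist_le_walk_length[of V E "x # xs"] xs xs_eq enat by (simp add: one_enat_def)
qed simp

lemma gdist_Suc_obtain_neighbour:
  assumes "gdist V E x y = enat (Suc k)"
  obtains v where "x \<in> V" "E x v" "gdist V E v y = enat k"
proof -
  obtain xs where xs: "graph_walk V E xs" "hd xs = x" "last xs = y" "length xs = Suc (Suc k)"
    using assms by (rule gdist_obtain_shortest_walk)
  then obtain v ys where xs_eq: "xs = x # v # ys"
    by (cases xs rule: remdups_adj.cases) auto
  then have walk: "x \<in> V" "E x v" "graph_walk V E (v # ys)"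
    using xs(1) by (simp_all add: graph_walk_Cons_Cons)
  have "gdist V E v y \<le> enat k"
    using gdist_le_walk_length[OF walk(3)] xs xs_eq by simp
  moreover have "enat (Suc k) \<le> 1 + gdist V E v y"
    using gdist_edge_le[of x V E v y] walk assms by simp
  ultimately have "gdist V E v y = enat k"
    by (cases "gdist V E v y") (auto simp: one_enat_def)
  with walk that show thesis by blast
qed

lemma code_dist_le:
  assumes "a \<in> C" and "b \<in> C" and "a \<noteq> b"
  shows "code_dist V E C \<le> gdist V E a b"
  unfolding code_dist_def using assms by (intro INF_lower2[of "(a, b)"]) auto

lemma code_dist_greatest:
  assumes "\<And>a b. a \<in> C \<Longrightarrow> b \<in> C \<Longrightarrow> a \<noteq> b \<Longrightarrow> t \<le> gdist V E a b"
  shows "t \<le> code_dist V E C"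
  unfolding code_dist_def using assms by (auto intro!: INF_greatest)

lemma code_dist_obtain_pair:
  assumes "code_dist V E C = enat n"
  obtains a b where "a \<in> C" "b \<in> C" "a \<noteq> b" "gdist V E a b = enat n"
proof -
  let ?P = "{(a, b). a \<in> C \<and> b \<in> C \<and> a \<noteq> b}"
  let ?d = "\<lambda>p. gdist V E (fst p) (snd p)"
  have "?P \<noteq> {}"
  proof
    assume "?P = {}"
    then have "code_dist V E C = \<infinity>"
      unfolding code_dist_def by (simp only: image_empty Inf_empty top_enat_def)
    with assms show False
      by simp
  qed
  then obtain p where "p \<in> ?P"
    by blast
  then have "Inf (?d ` ?P) \<in> ?d ` ?P"
    by (rule wellorder_InfI[OF imageI])
  then obtain a b where "(a, b) \<in> ?P" "gdist V E a b = code_dist V E C"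
    unfolding code_dist_def by auto
  then show thesis
    using assms that by auto
qed

lemma code_dist_finite:
  assumes "connected_graph V E" and "C \<subseteq> V" and "2 \<le> card C"
  shows "code_dist V E C \<noteq> \<infinity>"
proof -
  obtain a b where "a \<in> C" "b \<in> C" "a \<noteq> b"
    using assms(3) card_le_Suc0_iff_eq[of C] by (cases "finite C") auto
  then have "gdist V E a b \<noteq> \<infinity>"
    using assms(1,2) by (auto simp: connected_graph_def)
  moreover have "code_dist V E C \<le> gdist V E a b"
    using \<open>a \<in> C\<close> \<open>b \<in> C\<close> \<open>a \<noteq> b\<close> by (rule code_dist_le)
  ultimately show ?thesis
    by (cases "code_dist V E C") auto
qed

lemma code_dist_Suc_decrease:
  assumes "simple_graph V E" and "C \<subseteq> V" and "code_dist V E C = enat (Suc (Suc k))"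
  obtains C' where "C' \<subseteq> V" "card C' = card C" "code_dist V E C' = enat (Suc k)"
proof -
  have sym: "symp E"
    using assms(1) by (auto simp: simple_graph_def intro: sympI)
  obtain x y where xy: "x \<in> C" "y \<in> C" "x \<noteq> y" "gdist V E x y = enat (Suc (Suc k))"
    using assms(3) by (rule code_dist_obtain_pair)
  obtain v where v: "x \<in> V" "E x v" "gdist V E v y = enat (Suc k)"
    using xy(4) by (rule gdist_Suc_obtain_neighbour)
  have C_far: "enat (Suc (Suc k)) \<le> gdist V E a b" if "a \<in> C" "b \<in> C" "a \<noteq> b" for a b
    using code_dist_le[OF that, of V E] assms(3) by simp
  have v_far: "enat (Suc k) \<le> gdist V E v z" if "z \<in> C - {x}" for z
  proof -
    have "enat (Suc (Suc k)) \<le> gdist V E x z"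
      using C_far[of x z] that xy by auto
    also have "\<dots> \<le> 1 + gdist V E v z"
      using v(1,2) by (rule gdist_edge_le)
    finally show ?thesis
      by (cases "gdist V E v z") (auto simp: one_enat_def)
  qed
  have "v \<in> V"
    using v(2) assms(1) by (auto simp: simple_graph_def)
  have "v \<noteq> y"
    using v(3) gdist_self[of y V E] xy(2) assms(2) by (auto simp: zero_enat_def)
  then have "v \<notin> C - {x}"
    using C_far[of v y] v(3) xy(2) by auto
  define C' where "C' = insert v (C - {x})"
  have "C' \<subseteq> V"
    using assms(2) \<open>v \<in> V\<close> by (auto simp: C'_def)
  moreover have "card C' = card C"
  proof (cases "finite C")
    case True
    then show ?thesis
      using \<open>v \<notin> C - {x}\<close> xy(1) unfolding C'_def
      by (metis card_insert_disjoint finite_Diff card_Suc_Diff1)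
  qed (simp add: C'_def)
  moreover have "enat (Suc k) \<le> code_dist V E C'"
  proof (rule code_dist_greatest)
    fix a b assume "a \<in> C'" "b \<in> C'" "a \<noteq> b"
    then consider "a = v" "b \<in> C - {x}" | "b = v" "a \<in> C - {x}" | "a \<in> C" "b \<in> C"
      by (auto simp: C'_def)
    then show "enat (Suc k) \<le> gdist V E a b"
    proof cases
      case 1
      then show ?thesis
        using v_far by blast
    next
      case 2
      then show ?thesis
        using v_far gdist_sym[OF sym, of V a b] by simp
    next
      case 3
      have "enat (Suc k) \<le> enat (Suc (Suc k))"
        by simp
      also have "\<dots> \<le> gdist V E a b"
        using C_far 3 \<open>a \<noteq> b\<close> by blast
      finally show ?thesis .
    qed
  qed
  moreover have "code_dist V E C' \<le> enat (Suc k)"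
    using code_dist_le[of v C' y V E] v(3) \<open>v \<noteq> y\<close> xy by (auto simp: C'_def)
  ultimately show thesis
    using that by auto
qed

lemma code_dist_decrease:
  assumes "simple_graph V E" and "1 \<le> d" and "d \<le> n"
    and "C \<subseteq> V" and "code_dist V E C = enat n"
  shows "\<exists>C'. C' \<subseteq> V \<and> card C' = card C \<and> code_dist V E C' = enat d"
  using assms(3-5)
proof (induction n arbitrary: C rule: dec_induct)
  case base
  then show ?case by blast
next
  case (step n)
  obtain k where "n = Suc k"
    using step.hyps(1) assms(2) by (cases n) auto
  then have "code_dist V E C = enat (Suc (Suc k))"
    using step.prems(2) by simp
  then obtain C'' where "C'' \<subseteq> V" "card C'' = card C" "code_dist V E C'' = enat (Suc k)"
    by (rule code_dist_Suc_decrease[OF assms(1) step.prems(1)])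
  then show ?case
    using step.IH[of C''] \<open>n = Suc k\<close> by auto
qed

theorem proposition2p1:
  fixes V :: "'a set" and E :: "'a \<Rightarrow> 'a \<Rightarrow> bool" and d :: nat
  assumes "finite V" and "simple_graph V E" and "connected_graph V E" and "d \<ge> 1"
  shows "{card C | C. C \<subseteq> V \<and> 2 \<le> card C \<and> code_dist V E C = enat d}
       = {card C | C. C \<subseteq> V \<and> 2 \<le> card C \<and> code_dist V E C \<ge> enat d}"
  (is "?exact = ?at_least")
proof
  show "?exact \<subseteq> ?at_least"
    by auto
  show "?at_least \<subseteq> ?exact"
  proof
    fix m assume "m \<in> ?at_least"
    then obtain C where C: "C \<subseteq> V" "2 \<le> card C" "enat d \<le> code_dist V E C" "m = card C"
      by blast
    obtain n where n: "code_dist V E C = enat n"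
      using code_dist_finite[OF assms(3) C(1,2)] by auto
    then have "d \<le> n"
      using C(3) by simp
    then obtain C' where "C' \<subseteq> V" "card C' = card C" "code_dist V E C' = enat d"
      using code_dist_decrease[OF assms(2,4) _ C(1) n] by blast
    then show "m \<in> ?exact"
      using C by (auto intro!: exI[of _ C'])
  qed
qed

end
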